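(* Let $X$ be a locally convex space, let $T:X\rightrightarrows X^{*}$, and let $V\subset X$ with $V\cap D(T)\neq\emptyset$. The following are equivalent: (i) $V$ locates $T$; (ii) $T$ is $V$-NI and $\operatorname{Pr}_{X}[\varphi_{T|_{V}}=c]\cap V\subset D(T)$; (iii) $\operatorname{Pr}_{X}(\operatorname{dom}\varphi_{T|_{V}})\cap V\subset\operatorname{Pr}_{X}([\varphi_{T|_{V}}\ge c]\cap\operatorname{dom}\varphi_{T|_{V}})$ and $\operatorname{Pr}_{X}[\varphi_{T|_{V}}=c]\cap V\subset D(T)$. If, in addition, $T|_{V}\in\mathcal{M}(X)$, then $V$ locates $T$ if and only if $T$ is $V$-NI and $\operatorname{Pr}_{X}[\varphi_{T|_{V}}=c]\cap V=D(T)\cap V$.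
   Context: $X$ is a non-trivial Hausdorff locally convex space, $X^*$ its dual, $c(x,x^* )=\langle x,x^*\rangle$ on $Z=X\times X^*$. Operators are identified with their graphs; $D(T)$ is the domain; $T|_V$ has graph $\operatorname{Graph}T\cap(V\times X^* )$; $\operatorname{Pr}_X$ is the projection onto $X$. $\varphi_{T}(x,x^{*})=\sup\{\langle x,u^{*}\rangle+\langle u,x^{*}\rangle-\langle u,u^{*}\rangle\mid(u,u^{*})\in T\}$ ($\sup\emptyset=-\infty$); $\operatorname{dom}f=\{f<\infty\}$; $[f\le g]=\{z\mid f(z)\le g(z)\}$, etc. $\mathcal M(X)$: monotone operators with non-empty graph. $V$ locates $T$ if $\operatorname{Pr}_X([\varphi_{T|_V}\le c])\cap V\subset D(T)$; $T$ is $V$-NI if $\varphi_{T|_V}\ge c$ on $V\times X^*$. *)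

theory Defs
  imports "HOL-Analysis.Analysis" "HOL-Library.Extended_Real"
begin

definition locally_convex_space :: "'a::{real_vector,t2_space} itself \<Rightarrow> bool" where
  "locally_convex_space _ \<longleftrightarrow>
     continuous_on UNIV (\<lambda>p::'a \<times> 'a. fst p + snd p) \<and>
     continuous_on UNIV (\<lambda>p::real \<times> 'a. fst p *\<^sub>R snd p) \<and>
     (\<forall>U::'a set. open U \<and> 0 \<in> U \<longrightarrow> (\<exists>W. open W \<and> convex W \<and> 0 \<in> W \<and> W \<subseteq> U)) \<and>
     (\<exists>x::'a. x \<noteq> 0)"

text \<open>Topological dual X^*: continuous linear functionals. Pairing <x,x^*> = x^* x.\<close>
definition dual_space :: "('a::{real_vector,topological_space} \<Rightarrow> real) set" where
  "dual_space = {f. linear f \<and> continuous_on UNIV f}"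

definition Zsp :: "('a::{real_vector,topological_space} \<times> ('a \<Rightarrow> real)) set" where
  "Zsp = UNIV \<times> dual_space"

definition cpl :: "'a \<times> ('a \<Rightarrow> real) \<Rightarrow> real" where
  "cpl z = snd z (fst z)"

text \<open>Fitzpatrick function (sup of the empty set is -\<infinity>).\<close>
definition fitz :: "('a \<times> ('a \<Rightarrow> real)) set \<Rightarrow> 'a \<times> ('a \<Rightarrow> real) \<Rightarrow> ereal" where
  "fitz T z = (SUP p\<in>T. ereal (snd p (fst z) + snd z (fst p) - snd p (fst p)))"

definition restr :: "('a \<times> 'b) set \<Rightarrow> 'a set \<Rightarrow> ('a \<times> 'b) set" where
  "restr T V = T \<inter> (V \<times> UNIV)"

definition dom_op :: "('a \<times> 'b) set \<Rightarrow> 'a set" where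
  "dom_op T = fst ` T"

definition PrX :: "('a \<times> 'b) set \<Rightarrow> 'a set" where
  "PrX S = fst ` S"

definition fdom :: "('a::{real_vector,topological_space} \<times> ('a \<Rightarrow> real) \<Rightarrow> ereal) \<Rightarrow> ('a \<times> ('a \<Rightarrow> real)) set" where
  "fdom f = {z \<in> Zsp. f z < \<infinity>}"

definition monotone_op :: "('a::real_vector \<times> ('a \<Rightarrow> real)) set \<Rightarrow> bool" where
  "monotone_op T \<longleftrightarrow> (\<forall>(x,f)\<in>T. \<forall>(y,g)\<in>T. f x - f y - g x + g y \<ge> 0)"

definition MX :: "('a::{real_vector,topological_space} \<times> ('a \<Rightarrow> real)) set set" where
  "MX = {T. T \<subseteq> Zsp \<and> T \<noteq> {} \<and> monotone_op T}"

definition locates :: "'a::{real_vector,topological_space} set \<Rightarrow> ('a \<times> ('a \<Rightarrow> real)) set \<Rightarrow> bool" where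
  "locates V T \<longleftrightarrow>
     PrX {z \<in> Zsp. fitz (restr T V) z \<le> ereal (cpl z)} \<inter> V \<subseteq> dom_op T"

definition V_NI :: "'a::{real_vector,topological_space} set \<Rightarrow> ('a \<times> ('a \<Rightarrow> real)) set \<Rightarrow> bool" where
  "V_NI V T \<longleftrightarrow> (\<forall>z \<in> V \<times> dual_space. fitz (restr T V) z \<ge> ereal (cpl z))"

end

theory Submission
  imports Defs
begin

text \<open>
  Everything hinges on the observation that, for fixed \<open>x\<close>, the function
  \<open>x\<^sup>* \<mapsto> \<phi>(x, x\<^sup>*) - \<langle>x, x\<^sup>*\<rangle>\<close> is a supremum of affine functions of \<open>x\<^sup>*\<close>.
  Along a segment from a point where it is \<open>\<le> 0\<close> to a point where it is finite and
  \<open>\<ge> 0\<close>, the largest parameter at which it is still \<open>\<le> 0\<close> must be a zero of it,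
  since convexity would otherwise push the sublevel set further.  This yields
  (iii) \<open>\<Longrightarrow>\<close> (i); the remaining implications only use that
  \<open>\<phi>\<^bsub>T|\<^sub>V\<^esub>(x, x\<^sup>*) \<ge> \<langle>x, x\<^sup>*\<rangle>\<close> whenever \<open>x \<in> D(T) \<inter> V\<close>, with equality on the graph
  of a monotone operator.
\<close>

lemma SUP_affine_crossing:
  fixes a b :: "'p \<Rightarrow> real"
  assumes start: "\<forall>p\<in>S. a p \<le> \<alpha>"
    and end_ge: "ereal (\<alpha> + \<beta>) \<le> (SUP p\<in>S. ereal (a p + b p))"
    and end_finite: "(SUP p\<in>S. ereal (a p + b p)) < \<infinity>"
  shows "\<exists>t\<in>{0..1}. (SUP p\<in>S. ereal (a p + t * b p)) = ereal (\<alpha> + t * \<beta>)"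
proof -
  define d where "d p t = a p - \<alpha> + t * (b p - \<beta>)" for p t
  have SUP_le_iff_d: "(SUP p\<in>S. ereal (a p + t * b p)) \<le> ereal (\<alpha> + t * \<beta>) \<longleftrightarrow> (\<forall>p\<in>S. d p t \<le> 0)"
    for t by (auto simp: SUP_le_iff d_def algebra_simps)
  define SS where "SS = {t\<in>{0..1::real}. \<forall>p\<in>S. d p t \<le> 0}"
  have "SS = {0..1} \<inter> (\<Inter>p\<in>S. {t. a p - \<alpha> + t * (b p - \<beta>) \<le> 0})"
    unfolding SS_def d_def by auto
  then have "closed SS"
    by (simp add: closed_Int closed_INT closed_Collect_le continuous_intros)
  have "0 \<in> SS" using start unfolding SS_def d_def by auto
  have bdd: "bdd_above SS" unfolding SS_def by (rule bdd_aboveI[of _ 1]) auto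
  define t0 where "t0 = Sup SS"
  have "t0 \<in> SS"
    unfolding t0_def using closed_contains_Sup[OF _ bdd \<open>closed SS\<close>] \<open>0 \<in> SS\<close> by auto
  then have t0: "0 \<le> t0" "t0 \<le> 1" "\<forall>p\<in>S. d p t0 \<le> 0" unfolding SS_def by auto
  have "ereal (\<alpha> + t0 * \<beta>) \<le> (SUP p\<in>S. ereal (a p + t0 * b p))"
  proof (rule ccontr)
    assume "\<not> ?thesis"
    then have "(SUP p\<in>S. ereal (a p + t0 * b p)) < ereal (\<alpha> + t0 * \<beta>)" by simp
    then obtain r where r: "(SUP p\<in>S. ereal (a p + t0 * b p)) < ereal r" "ereal r < ereal (\<alpha> + t0 * \<beta>)"
      using ereal_dense2 by blast
    define \<delta> where "\<delta> = \<alpha> + t0 * \<beta> - r"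
    have "\<delta> > 0" using r(2) unfolding \<delta>_def by simp
    have d_t0: "d p t0 \<le> - \<delta>" if "p \<in> S" for p
    proof -
      have "ereal (a p + t0 * b p) < ereal r"
        using SUP_upper[OF that, of "\<lambda>p. ereal (a p + t0 * b p)"] r(1) by (rule le_less_trans)
      then show ?thesis unfolding d_def \<delta>_def by (simp add: algebra_simps)
    qed
    define M where "M = real_of_ereal (SUP p\<in>S. ereal (a p + b p))"
    have M: "(SUP p\<in>S. ereal (a p + b p)) = ereal M"
      unfolding M_def using end_ge end_finite by (cases "SUP p\<in>S. ereal (a p + b p)") auto
    define K where "K = M - \<alpha> - \<beta>"
    have "K \<ge> 0" using end_ge M unfolding K_def by simp
    have d_1: "d p 1 \<le> K" if "p \<in> S" for p
      using SUP_upper[OF that, of "\<lambda>p. ereal (a p + b p)"] M unfolding d_def K_def by simp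
    have "t0 < 1"
    proof (rule ccontr)
      assume "\<not> t0 < 1"
      with t0 have "t0 = 1" by simp
      with r end_ge M show False by simp
    qed
    \<comment> \<open>Moving from \<open>t0\<close> a fraction \<open>l\<close> towards 1 keeps every \<open>d p\<close> nonpositive.\<close>
    define l where "l = \<delta> / (\<delta> + K)"
    have l: "0 < l" "l \<le> 1" "l * (\<delta> + K) = \<delta>"
      unfolding l_def using \<open>\<delta> > 0\<close> \<open>K \<ge> 0\<close> by auto
    define s where "s = t0 + l * (1 - t0)"
    have "s \<in> SS"
    proof -
      have "0 \<le> s" using t0 l \<open>t0 < 1\<close> unfolding s_def by simp
      moreover have "s = 1 - (1 - l) * (1 - t0)" unfolding s_def by (simp add: algebra_simps)
      then have "s \<le> 1" using l \<open>t0 < 1\<close> by simp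
      moreover have "d p s \<le> 0" if "p \<in> S" for p
      proof -
        have "d p s = (1 - l) * d p t0 + l * d p 1"
          unfolding d_def s_def by (simp add: algebra_simps)
        also have "\<dots> \<le> (1 - l) * (- \<delta>) + l * K"
          using d_t0[OF that] d_1[OF that] l by (intro add_mono mult_left_mono) auto
        also have "\<dots> = 0" using l(3) by (simp add: algebra_simps)
        finally show ?thesis .
      qed
      ultimately show ?thesis unfolding SS_def by auto
    qed
    then have "s \<le> t0" unfolding t0_def using bdd by (rule cSup_upper)
    moreover have "t0 < s" unfolding s_def using l \<open>t0 < 1\<close> by simp
    ultimately show False by simp
  qed
  with t0 SUP_le_iff_d[of t0] show ?thesis by (intro bexI[of _ t0]) auto
qed

lemma fitz_upper:
  "p \<in> S \<Longrightarrow> ereal (snd p (fst z) + snd z (fst p) - snd p (fst p)) \<le> fitz S z"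
  unfolding fitz_def by (rule SUP_upper)

lemma fitz_le_iff:
  "fitz S z \<le> ereal r \<longleftrightarrow> (\<forall>p\<in>S. snd p (fst z) + snd z (fst p) - snd p (fst p) \<le> r)"
  unfolding fitz_def by (simp add: SUP_le_iff)

lemma mem_Zsp_iff: "z \<in> Zsp \<longleftrightarrow> snd z \<in> dual_space"
  by (cases z) (auto simp: Zsp_def)

lemma dual_space_segment:
  assumes "xs \<in> dual_space" and "ys \<in> dual_space"
  shows "(\<lambda>v. xs v + t * (ys v - xs v)) \<in> dual_space"
proof -
  have "linear xs" "linear ys" "continuous_on UNIV xs" "continuous_on UNIV ys"
    using assms by (auto simp: dual_space_def)
  then show ?thesis
    unfolding dual_space_def
    by (auto intro!: linearI continuous_intros
        simp: linear_add linear_scale algebra_simps)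
qed

lemma fitz_crossing:
  assumes xs: "xs \<in> dual_space" and ys: "ys \<in> dual_space"
    and "fitz S (x, xs) \<le> ereal (xs x)"
    and "ereal (ys x) \<le> fitz S (x, ys)" and "fitz S (x, ys) < \<infinity>"
  shows "\<exists>w\<in>dual_space. fitz S (x, w) = ereal (w x)"
proof -
  define w where "w t = (\<lambda>v. xs v + t * (ys v - xs v))" for t
  define a where "a p = snd p x + xs (fst p) - snd p (fst p)" for p :: "'a \<times> ('a \<Rightarrow> real)"
  define b where "b p = ys (fst p) - xs (fst p)" for p :: "'a \<times> ('a \<Rightarrow> real)"
  have fitz_w: "fitz S (x, w t) = (SUP p\<in>S. ereal (a p + t * b p))" for t
    unfolding fitz_def w_def a_def b_def by (simp add: algebra_simps)
  have w_x: "w t x = xs x + t * (ys x - xs x)" for t unfolding w_def by simp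
  have "w 1 = ys" unfolding w_def by simp
  have "\<forall>p\<in>S. a p \<le> xs x"
    using \<open>fitz S (x, xs) \<le> ereal (xs x)\<close> unfolding fitz_le_iff a_def by simp
  moreover have "ereal (xs x + (ys x - xs x)) \<le> (SUP p\<in>S. ereal (a p + b p))"
    using \<open>ereal (ys x) \<le> fitz S (x, ys)\<close> fitz_w[of 1] \<open>w 1 = ys\<close> by simp
  moreover have "(SUP p\<in>S. ereal (a p + b p)) < \<infinity>"
    using \<open>fitz S (x, ys) < \<infinity>\<close> fitz_w[of 1] \<open>w 1 = ys\<close> by simp
  ultimately obtain t where "fitz S (x, w t) = ereal (w t x)"
    using SUP_affine_crossing[where \<alpha> = "xs x" and \<beta> = "ys x - xs x"]
    unfolding fitz_w w_x by blast
  then show ?thesis using dual_space_segment[OF xs ys] unfolding w_def by blast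
qed

lemma cpl_le_fitz_restr:
  assumes "fst z \<in> dom_op T \<inter> V"
  shows "ereal (cpl z) \<le> fitz (restr T V) z"
proof -
  obtain u where "(fst z, u) \<in> restr T V"
    using assms unfolding dom_op_def restr_def by force
  from fitz_upper[OF this, of z] show ?thesis by (simp add: cpl_def)
qed

lemma fitz_eq_cpl_if_monotone:
  assumes "monotone_op S" and "p \<in> S"
  shows "fitz S p = ereal (cpl p)"
proof (rule antisym)
  show "fitz S p \<le> ereal (cpl p)"
    unfolding fitz_le_iff cpl_def
    using assms unfolding monotone_op_def by (fastforce simp: case_prod_beta)
  show "ereal (cpl p) \<le> fitz S p"
    using fitz_upper[OF assms(2), of p] by (simp add: cpl_def)
qed

lemma locates_imp_V_NI:
  assumes "locates V T"
  shows "V_NI V T"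
  unfolding V_NI_def
proof
  fix z :: "'a \<times> ('a \<Rightarrow> real)"
  assume z: "z \<in> V \<times> dual_space"
  show "ereal (cpl z) \<le> fitz (restr T V) z"
  proof (cases "fitz (restr T V) z \<le> ereal (cpl z)")
    case True
    with z have "fst z \<in> PrX {z \<in> Zsp. fitz (restr T V) z \<le> ereal (cpl z)} \<inter> V"
      unfolding PrX_def by (auto simp: mem_Zsp_iff)
    with assms z have "fst z \<in> dom_op T \<inter> V" unfolding locates_def by auto
    then show ?thesis by (rule cpl_le_fitz_restr)
  qed simp
qed

lemma locates_iff_V_NI:
  "locates V T \<longleftrightarrow>
     V_NI V T \<and> PrX {z \<in> Zsp. fitz (restr T V) z = ereal (cpl z)} \<inter> V \<subseteq> dom_op T"
  (is "_ \<longleftrightarrow> _ \<and> ?contact")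
proof
  assume "locates V T"
  moreover have "PrX {z \<in> Zsp. fitz (restr T V) z = ereal (cpl z)}
      \<subseteq> PrX {z \<in> Zsp. fitz (restr T V) z \<le> ereal (cpl z)}"
    unfolding PrX_def by auto
  ultimately show "V_NI V T \<and> ?contact"
    using locates_imp_V_NI unfolding locates_def by blast
next
  assume NI: "V_NI V T \<and> ?contact"
  have "{z \<in> Zsp. fitz (restr T V) z \<le> ereal (cpl z)} \<inter> (V \<times> UNIV)
      \<subseteq> {z \<in> Zsp. fitz (restr T V) z = ereal (cpl z)}"
    using NI unfolding V_NI_def by (fastforce simp: mem_Zsp_iff)
  then have "PrX {z \<in> Zsp. fitz (restr T V) z \<le> ereal (cpl z)} \<inter> V
      \<subseteq> PrX {z \<in> Zsp. fitz (restr T V) z = ereal (cpl z)} \<inter> V"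
    unfolding PrX_def by fastforce
  with NI show "locates V T" unfolding locates_def by blast
qed

lemma locates_iff_crossing:
  "locates V T \<longleftrightarrow>
     PrX (fdom (fitz (restr T V))) \<inter> V
       \<subseteq> PrX ({z \<in> Zsp. fitz (restr T V) z \<ge> ereal (cpl z)} \<inter> fdom (fitz (restr T V))) \<and>
     PrX {z \<in> Zsp. fitz (restr T V) z = ereal (cpl z)} \<inter> V \<subseteq> dom_op T"
  (is "_ \<longleftrightarrow> ?reach \<and> ?contact")
proof
  assume "locates V T"
  then have "V_NI V T" and ?contact using locates_iff_V_NI by blast+
  moreover from \<open>V_NI V T\<close> have ?reach
    unfolding V_NI_def PrX_def fdom_def by (fastforce simp: mem_Zsp_iff)
  ultimately show "?reach \<and> ?contact" by blast
next
  assume H: "?reach \<and> ?contact"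
  show "locates V T" unfolding locates_def
  proof
    fix x
    assume "x \<in> PrX {z \<in> Zsp. fitz (restr T V) z \<le> ereal (cpl z)} \<inter> V"
    then obtain xs where xs: "xs \<in> dual_space" "fitz (restr T V) (x, xs) \<le> ereal (xs x)"
      and "x \<in> V"
      unfolding PrX_def cpl_def by (auto simp: mem_Zsp_iff)
    have "fitz (restr T V) (x, xs) < \<infinity>" using xs(2) by (rule le_less_trans) simp
    with xs(1) \<open>x \<in> V\<close> have "x \<in> PrX (fdom (fitz (restr T V))) \<inter> V"
      unfolding PrX_def fdom_def by (auto simp: mem_Zsp_iff intro!: image_eqI[of _ _ "(x, xs)"])
    with H obtain ys where ys: "ys \<in> dual_space" "ereal (ys x) \<le> fitz (restr T V) (x, ys)"
        "fitz (restr T V) (x, ys) < \<infinity>"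
      unfolding PrX_def fdom_def cpl_def by (auto simp: mem_Zsp_iff)
    obtain w where "w \<in> dual_space" "fitz (restr T V) (x, w) = ereal (w x)"
      using fitz_crossing[OF xs(1) ys(1) xs(2) ys(2,3)] by blast
    with \<open>x \<in> V\<close> have "x \<in> PrX {z \<in> Zsp. fitz (restr T V) z = ereal (cpl z)} \<inter> V"
      unfolding PrX_def by (auto simp: cpl_def mem_Zsp_iff intro!: image_eqI[of _ _ "(x, w)"])
    with H show "x \<in> dom_op T" by blast
  qed
qed

lemma dom_op_inter_subset_contact:
  assumes "T \<subseteq> Zsp" and "monotone_op (restr T V)"
  shows "dom_op T \<inter> V \<subseteq> PrX {z \<in> Zsp. fitz (restr T V) z = ereal (cpl z)}"
proof
  fix x
  assume "x \<in> dom_op T \<inter> V"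
  then obtain u where "(x, u) \<in> restr T V" unfolding dom_op_def restr_def by force
  moreover from this assms(1) have "(x, u) \<in> Zsp" unfolding restr_def by blast
  ultimately show "x \<in> PrX {z \<in> Zsp. fitz (restr T V) z = ereal (cpl z)}"
    using fitz_eq_cpl_if_monotone[OF assms(2)] unfolding PrX_def by force
qed

theorem theorem2p11:
  fixes T :: "('a::{real_vector,t2_space} \<times> ('a \<Rightarrow> real)) set"
    and V :: "'a set"
  assumes "locally_convex_space TYPE('a)"
    and "T \<subseteq> Zsp"
    and "V \<inter> dom_op T \<noteq> {}"
  shows "(locates V T \<longleftrightarrow>
           V_NI V T \<and>
           PrX {z \<in> Zsp. fitz (restr T V) z = ereal (cpl z)} \<inter> V \<subseteq> dom_op T)
       \<and> (locates V T \<longleftrightarrow>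
           PrX (fdom (fitz (restr T V))) \<inter> V
             \<subseteq> PrX ({z \<in> Zsp. fitz (restr T V) z \<ge> ereal (cpl z)} \<inter> fdom (fitz (restr T V))) \<and>
           PrX {z \<in> Zsp. fitz (restr T V) z = ereal (cpl z)} \<inter> V \<subseteq> dom_op T)
       \<and> (restr T V \<in> MX \<longrightarrow>
           (locates V T \<longleftrightarrow>
              V_NI V T \<and>
              PrX {z \<in> Zsp. fitz (restr T V) z = ereal (cpl z)} \<inter> V = dom_op T \<inter> V))"
proof (intro conjI impI)
  show "restr T V \<in> MX \<Longrightarrow> locates V T \<longleftrightarrow> V_NI V T \<and>
      PrX {z \<in> Zsp. fitz (restr T V) z = ereal (cpl z)} \<inter> V = dom_op T \<inter> V"
    using locates_iff_V_NI dom_op_inter_subset_contact[OF assms(2)]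
    unfolding MX_def by blast
qed (rule locates_iff_V_NI locates_iff_crossing)+

end
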